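(* Let $\bar J$ be the standard complex structure on $\mathbb C^2$ and $\bar D$ the standard flat connection. Then $(\mathbb C^2,\bar J,[\bar D])$ can be realized as a projective special complex manifold such that $\bar B\neq0$, $\bar{\mathcal B}=0$ and $\bar c=0$, by means of a (trivial) principal $S^1$-bundle with a flat connection $\eta$ (i.e. with respect to a principal connection of type $(1,0)$ on the $\mathbb C^*$-bundle whose $\sqrt{-1}$-component is $\eta$). The resulting conical special complex manifold is non-trivial and of horizontal type with respect to this connection.
   Context: A conical special complex manifold $(M,J,\nabla,\xi)$: complex manifold with torsion-free flat $\nabla$ such that $A:=\nabla J$ is symmetric, nowhere-vanishing $\xi$ with $\nabla\xi=\mathrm{Id}$, $L_\xi J=0$; it is trivial if $A=0$. Realizing $(\bar M,\bar J,\mathcal P)$ as a projective special complex manifold means: finding such $M$ on which $\xi-\sqrt{-1}J\xi$ generates a principal $\mathbb C^*$-action with bundle $\pi:M\to\bar M$ inducing $\bar J$, such that the canonical c-projective structure equals $\mathcal P$. Canonical c-projective structure: the c-projective class of $D^{(\omega)}_XY:=\pi_*(D_{\tilde X}\tilde Y)$, $D=\nabla-\frac12JA$, $\tilde X$ horizontal lifts for a principal connection $\omega$ with $J$-invariant kernel (independent of $\omega$). Given such $\omega$ and a local trivialization with fibre polar coordinates $(r,\theta)$, $\xi=r\partial_r$, $J\xi=\partial_\theta$, the tensor $B:=e^{2\theta J}A$ ($e^{sJ}=\cos s\,\mathrm{Id}+\sin s\,J$) is projectable and decomposes as $B_{\tilde X}\tilde Y=(\bar B_XY)^{\sim}+\bar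 c(X,Y)\xi+\bar c(X,\bar JY)J\xi$, defining local tensors $\bar B$ (symmetric, anticommuting with $\bar J$) and $\bar c$ on the base; $\bar{\mathcal B}(X,Y):=\mathrm{tr}(\bar B_X\bar B_Y)$ is globally defined. $M$ is of horizontal type with respect to $\omega$ if $\nabla J$ takes only horizontal values (equivalently $\bar c=0$). *)

theory Defs
  imports "HOL-Analysis.Analysis"
begin

text \<open>The total space is the trivial bundle
  M = C^2 x C^* (an open subset of C^3 = R^6), with base C^2 and the standard
  C^*-action a.(z1,z2,w) = (z1,z2,a w).  Tangent vectors of M are elements of
  C^3, tangent vectors of the base are elements of C^2 (real vector spaces).\<close>

type_synonym tv = "complex \<times> complex \<times> complex"
type_synonym bv = "complex \<times> complex"

definition Mset :: "tv set" where
  "Mset = {p. snd (snd p) \<noteq> 0}"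

text \<open>bundle projection (it is linear, so it is also its own differential)\<close>
definition pr :: "tv \<Rightarrow> bv" where
  "pr v = (fst v, fst (snd v))"

definition fib :: "tv \<Rightarrow> complex" where
  "fib v = snd (snd v)"

text \<open>the C^*-action (linear in the point, hence also its differential)\<close>
definition Rmult :: "complex \<Rightarrow> tv \<Rightarrow> tv" where
  "Rmult a v = (fst v, fst (snd v), a * snd (snd v))"

text \<open>generator of the R_{>0}-part of the action: xi = r d/dr\<close>
definition xi :: "tv \<Rightarrow> tv" where
  "xi p = (0, 0, fib p)"

definition Jbar :: "bv \<Rightarrow> bv" where
  "Jbar x = (\<i> * fst x, \<i> * snd x)"

coinductive smooth_on :: "'a::real_normed_vector set \<Rightarrow> ('a \<Rightarrow> 'b::real_normed_vector) \<Rightarrow> bool"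
  for S where
  "f differentiable_on S \<Longrightarrow> (\<forall>v. smooth_on S (\<lambda>p. frechet_derivative f (at p) v))
     \<Longrightarrow> smooth_on S f"

text \<open>Affine connection nabla = d + G (Christoffel tensor G) on the open set Mset of R^6.\<close>

definition nablaV :: "(tv \<Rightarrow> tv \<Rightarrow>\<^sub>L tv \<Rightarrow>\<^sub>L tv) \<Rightarrow> (tv \<Rightarrow> tv) \<Rightarrow> tv \<Rightarrow> tv \<Rightarrow> tv" where
  "nablaV G Y p u = frechet_derivative Y (at p) u + blinfun_apply (blinfun_apply (G p) u) (Y p)"

text \<open>A = nabla J :  A p u v = (nabla_u J) v\<close>
definition nablaJ :: "(tv \<Rightarrow> tv \<Rightarrow>\<^sub>L tv \<Rightarrow>\<^sub>L tv) \<Rightarrow> (tv \<Rightarrow> tv \<Rightarrow>\<^sub>L tv) \<Rightarrow> tv \<Rightarrow> tv \<Rightarrow> tv \<Rightarrow> tv" where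
  "nablaJ G J p u v =
     blinfun_apply (frechet_derivative J (at p) u) v
     + blinfun_apply (blinfun_apply (G p) u) (blinfun_apply (J p) v)
     - blinfun_apply (J p) (blinfun_apply (blinfun_apply (G p) u) v)"

definition curv :: "(tv \<Rightarrow> tv \<Rightarrow>\<^sub>L tv \<Rightarrow>\<^sub>L tv) \<Rightarrow> tv \<Rightarrow> tv \<Rightarrow> tv \<Rightarrow> tv \<Rightarrow> tv" where
  "curv G p u v w =
     blinfun_apply (blinfun_apply (frechet_derivative G (at p) u) v) w
     - blinfun_apply (blinfun_apply (frechet_derivative G (at p) v) u) w
     + blinfun_apply (blinfun_apply (G p) u) (blinfun_apply (blinfun_apply (G p) v) w)
     - blinfun_apply (blinfun_apply (G p) v) (blinfun_apply (blinfun_apply (G p) u) w)"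

text \<open>Nijenhuis tensor of J, computed with the (torsion-free) coordinate derivative\<close>
definition nijenhuis :: "(tv \<Rightarrow> tv \<Rightarrow>\<^sub>L tv) \<Rightarrow> tv \<Rightarrow> tv \<Rightarrow> tv \<Rightarrow> tv" where
  "nijenhuis J p u v =
     blinfun_apply (frechet_derivative J (at p) (blinfun_apply (J p) u)) v
     - blinfun_apply (frechet_derivative J (at p) (blinfun_apply (J p) v)) u
     + blinfun_apply (J p) (blinfun_apply (frechet_derivative J (at p) v) u)
     - blinfun_apply (J p) (blinfun_apply (frechet_derivative J (at p) u) v)"

definition lieJ :: "(tv \<Rightarrow> tv \<Rightarrow>\<^sub>L tv) \<Rightarrow> (tv \<Rightarrow> tv) \<Rightarrow> tv \<Rightarrow> tv \<Rightarrow> tv" where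
  "lieJ J Y p v =
     blinfun_apply (frechet_derivative J (at p) (Y p)) v
     - frechet_derivative Y (at p) (blinfun_apply (J p) v)
     + blinfun_apply (J p) (frechet_derivative Y (at p) v)"

text \<open>Conical special complex manifold structure (J, nabla = d + G, xi) on Mset.
  "Complex manifold" = smooth integrable almost complex structure.\<close>
definition conical_special_complex ::
  "(tv \<Rightarrow> tv \<Rightarrow>\<^sub>L tv) \<Rightarrow> (tv \<Rightarrow> tv \<Rightarrow>\<^sub>L tv \<Rightarrow>\<^sub>L tv) \<Rightarrow> (tv \<Rightarrow> tv) \<Rightarrow> bool" where
  "conical_special_complex J G \<xi> \<longleftrightarrow>
     smooth_on Mset J \<and> smooth_on Mset G \<and> smooth_on Mset \<xi> \<and>
     (\<forall>p\<in>Mset. \<forall>v. blinfun_apply (J p) (blinfun_apply (J p) v) = - v) \<and>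
     (\<forall>p\<in>Mset. \<forall>u v. nijenhuis J p u v = 0) \<and>
     (\<forall>p\<in>Mset. \<forall>u v. blinfun_apply (blinfun_apply (G p) u) v = blinfun_apply (blinfun_apply (G p) v) u) \<and>
     (\<forall>p\<in>Mset. \<forall>u v w. curv G p u v w = 0) \<and>
     (\<forall>p\<in>Mset. \<forall>u v. nablaJ G J p u v = nablaJ G J p v u) \<and>
     (\<forall>p\<in>Mset. \<xi> p \<noteq> 0) \<and>
     (\<forall>p\<in>Mset. \<forall>u. nablaV G \<xi> p u = u) \<and>
     (\<forall>p\<in>Mset. \<forall>v. lieJ J \<xi> p v = 0)"

definition trivial_csc :: "(tv \<Rightarrow> tv \<Rightarrow>\<^sub>L tv) \<Rightarrow> (tv \<Rightarrow> tv \<Rightarrow>\<^sub>L tv \<Rightarrow>\<^sub>L tv) \<Rightarrow> bool" where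
  "trivial_csc J G \<longleftrightarrow> (\<forall>p\<in>Mset. \<forall>u v. nablaJ G J p u v = 0)"

text \<open>xi - i J xi generates the standard C^*-action of the trivial bundle
  (xi = r d/dr, J xi = d/dtheta), and the projection is holomorphic onto (C^2, Jbar).\<close>
definition bundle_compatible :: "(tv \<Rightarrow> tv \<Rightarrow>\<^sub>L tv) \<Rightarrow> bool" where
  "bundle_compatible J \<longleftrightarrow>
     (\<forall>p\<in>Mset. blinfun_apply (J p) (xi p) = (0, 0, \<i> * fib p)) \<and>
     (\<forall>p\<in>Mset. \<forall>v. pr (blinfun_apply (J p) v) = Jbar (pr v))"

text \<open>Principal C^*-connection omega (C-valued, invariant, reproducing the
  generators) of type (1,0), i.e. omega o J = i omega (J-invariant kernel).\<close>
definition principal_conn_10 :: "(tv \<Rightarrow> tv \<Rightarrow>\<^sub>L tv) \<Rightarrow> (tv \<Rightarrow> tv \<Rightarrow>\<^sub>L complex) \<Rightarrow> bool" where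
  "principal_conn_10 J \<omega> \<longleftrightarrow>
     smooth_on Mset \<omega> \<and>
     (\<forall>p\<in>Mset. blinfun_apply (\<omega> p) (xi p) = 1) \<and>
     (\<forall>p\<in>Mset. blinfun_apply (\<omega> p) (blinfun_apply (J p) (xi p)) = \<i>) \<and>
     (\<forall>p\<in>Mset. \<forall>a v. a \<noteq> 0 \<longrightarrow> blinfun_apply (\<omega> (Rmult a p)) (Rmult a v) = blinfun_apply (\<omega> p) v) \<and>
     (\<forall>p\<in>Mset. \<forall>v. blinfun_apply (\<omega> p) (blinfun_apply (J p) v) = \<i> * blinfun_apply (\<omega> p) v)"

text \<open>The sqrt(-1)-component eta = Im omega is flat: d eta = 0.\<close>
definition eta_flat :: "(tv \<Rightarrow> tv \<Rightarrow>\<^sub>L complex) \<Rightarrow> bool" where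
  "eta_flat \<omega> \<longleftrightarrow>
     (\<forall>p\<in>Mset. \<forall>u v. Im (blinfun_apply (frechet_derivative \<omega> (at p) u) v
                          - blinfun_apply (frechet_derivative \<omega> (at p) v) u) = 0)"

definition hl :: "(tv \<Rightarrow> tv \<Rightarrow>\<^sub>L complex) \<Rightarrow> tv \<Rightarrow> bv \<Rightarrow> tv" where
  "hl \<omega> p X = (THE v. pr v = X \<and> blinfun_apply (\<omega> p) v = 0)"

text \<open>c-projective change of a connection on (C^2, Jbar) by a 1-form Phi\<close>
definition cproj_term :: "(bv \<Rightarrow> bv \<Rightarrow>\<^sub>L real) \<Rightarrow> bv \<Rightarrow> bv \<Rightarrow> bv \<Rightarrow> bv" where
  "cproj_term \<Phi> x u v =
     blinfun_apply (\<Phi> x) u *\<^sub>R v + blinfun_apply (\<Phi> x) v *\<^sub>R u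
     - blinfun_apply (\<Phi> x) (Jbar u) *\<^sub>R Jbar v - blinfun_apply (\<Phi> x) (Jbar v) *\<^sub>R Jbar u"

text \<open>The canonical c-projective structure (class of D^(omega), D = nabla - 1/2 J A,
  D^(omega)_X Y = pr_*(D_{X~} Y~)) equals the class [Dbar] of the standard flat
  connection Dbar_X Y = dY(X) on C^2.\<close>
definition canonical_cproj_is_std ::
  "(tv \<Rightarrow> tv \<Rightarrow>\<^sub>L tv) \<Rightarrow> (tv \<Rightarrow> tv \<Rightarrow>\<^sub>L tv \<Rightarrow>\<^sub>L tv) \<Rightarrow> (tv \<Rightarrow> tv \<Rightarrow>\<^sub>L complex) \<Rightarrow> bool" where
  "canonical_cproj_is_std J G \<omega> \<longleftrightarrow>
     (\<exists>\<Phi>. smooth_on UNIV \<Phi> \<and>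
        (\<forall>X Y :: bv \<Rightarrow> bv. smooth_on UNIV X \<and> smooth_on UNIV Y \<longrightarrow>
          (\<forall>p\<in>Mset.
             (let Xt = (\<lambda>q. hl \<omega> q (X (pr q)));
                  Yt = (\<lambda>q. hl \<omega> q (Y (pr q)));
                  x = pr p
              in pr (nablaV G Yt p (Xt p)
                     - (1/2) *\<^sub>R blinfun_apply (J p) (nablaJ G J p (Xt p) (Yt p)))
                 = frechet_derivative Y (at x) (X x) + cproj_term \<Phi> x (X x) (Y x)))))"

text \<open>B = e^{2 theta J} A, theta the polar angle of the fibre coordinate\<close>
definition Bt :: "(tv \<Rightarrow> tv \<Rightarrow>\<^sub>L tv) \<Rightarrow> (tv \<Rightarrow> tv \<Rightarrow>\<^sub>L tv \<Rightarrow>\<^sub>L tv) \<Rightarrow> tv \<Rightarrow> tv \<Rightarrow> tv \<Rightarrow> tv" where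
  "Bt J G p u v =
     cos (2 * Arg (fib p)) *\<^sub>R nablaJ G J p u v
     + sin (2 * Arg (fib p)) *\<^sub>R blinfun_apply (J p) (nablaJ G J p u v)"

text \<open>Bbar and cbar from the decomposition
  B_{X~} Y~ = (Bbar_X Y)~ + cbar(X,Y) xi + cbar(X, Jbar Y) J xi\<close>
definition barB :: "(tv \<Rightarrow> tv \<Rightarrow>\<^sub>L tv) \<Rightarrow> (tv \<Rightarrow> tv \<Rightarrow>\<^sub>L tv \<Rightarrow>\<^sub>L tv) \<Rightarrow> (tv \<Rightarrow> tv \<Rightarrow>\<^sub>L complex)
    \<Rightarrow> tv \<Rightarrow> bv \<Rightarrow> bv \<Rightarrow> bv" where
  "barB J G \<omega> p X Y = pr (Bt J G p (hl \<omega> p X) (hl \<omega> p Y))"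

definition barc :: "(tv \<Rightarrow> tv \<Rightarrow>\<^sub>L tv) \<Rightarrow> (tv \<Rightarrow> tv \<Rightarrow>\<^sub>L tv \<Rightarrow>\<^sub>L tv) \<Rightarrow> (tv \<Rightarrow> tv \<Rightarrow>\<^sub>L complex)
    \<Rightarrow> tv \<Rightarrow> bv \<Rightarrow> bv \<Rightarrow> real" where
  "barc J G \<omega> p X Y =
     (THE c. \<exists>c'. Bt J G p (hl \<omega> p X) (hl \<omega> p Y)
               = hl \<omega> p (barB J G \<omega> p X Y) + c *\<^sub>R xi p
                 + c' *\<^sub>R blinfun_apply (J p) (xi p))"

definition tr :: "('a::euclidean_space \<Rightarrow> 'a) \<Rightarrow> real" where
  "tr f = (\<Sum>b\<in>Basis. inner (f b) b)"

end

theory Submission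
  imports Defs
begin

text \<open>On M = C^2 x C^* with coordinates (z1, z2, w) take the standard complex structure J,
  the principal connection \<omega> = dw/w (its kernel w = const is J-invariant and its imaginary
  part d\<theta> is closed), and the flat connection \<nabla> = d + \<Gamma> obtained by pulling back the
  standard connection of C^3 along the local diffeomorphism
  (z1, z2, w) \<mapsto> (w z1, w z2 + cnj(w z1^2)/2, w).
  Its antiholomorphic term makes A = \<nabla>J = -2i (cnj w / w) cnj(dz1 dz1) d/dz2 nonzero and
  horizontal; the factor e^(2 i \<theta>) = w / cnj w in B = e^(2\<theta>J) A cancels cnj w / w, so
  Bbar = -2i cnj(dz1 dz1) d/dz2; as Bbar vanishes on d/dz2, every Bbar_X Bbar_Y is zero.
  On horizontal lifts the antiholomorphic part of \<Gamma> is exactly cancelled by -1/2 J A,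
  so the canonical c-projective structure contains the standard flat connection itself.
  All tensors involved have coefficients that are Laurent polynomials in w and cnj w; this class
  is closed under differentiation, which gives smoothness by coinduction.\<close>

section \<open>Laurent polynomials in a complex coordinate\<close>

definition laurent_monomial :: "('a \<Rightarrow> complex) \<Rightarrow> int \<Rightarrow> int \<Rightarrow> 'a \<Rightarrow> complex" where
  "laurent_monomial l m n p = l p powi m * cnj (l p) powi n"

definition laurent_poly ::
  "('a \<Rightarrow> complex) \<Rightarrow> ((complex \<Rightarrow>\<^sub>L 'b::real_normed_vector) \<times> int \<times> int) list \<Rightarrow> 'a \<Rightarrow> 'b" where
  "laurent_poly l L p = (\<Sum>(T, m, n) \<leftarrow> L. T (laurent_monomial l m n p))"

definition laurent_poly_deriv ::
  "('a \<Rightarrow> complex) \<Rightarrow> 'a \<Rightarrow> ((complex \<Rightarrow>\<^sub>L 'b::real_normed_vector) \<times> int \<times> int) list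
     \<Rightarrow> ((complex \<Rightarrow>\<^sub>L 'b) \<times> int \<times> int) list" where
  "laurent_poly_deriv l v L = concat (map (\<lambda>(T, m, n).
     [(T o\<^sub>L blinfun_mult_right (of_int m * l v), m - 1, n),
      (T o\<^sub>L blinfun_mult_right (of_int n * cnj (l v)), m, n - 1)]) L)"

lemma laurent_monomial_simps:
  "laurent_monomial l 0 0 p = 1"
  "laurent_monomial l 1 0 p = l p"
  "laurent_monomial l (-1) 0 p = 1 / l p"
  "laurent_monomial l (-1) 1 p = cnj (l p) / l p"
  "laurent_monomial l (-2) 0 p = 1 / (l p)\<^sup>2"
  "laurent_monomial l (-2) 1 p = cnj (l p) / (l p)\<^sup>2"
  by (simp_all add: laurent_monomial_def power_int_minus divide_inverse)

lemma laurent_poly_Nil [simp]: "laurent_poly l [] p = 0"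
  by (simp add: laurent_poly_def)

lemma laurent_poly_Cons [simp]:
  "laurent_poly l ((T, m, n) # L) p = T (laurent_monomial l m n p) + laurent_poly l L p"
  by (simp add: laurent_poly_def)

lemma laurent_poly_append [simp]:
  "laurent_poly l (L @ K) p = laurent_poly l L p + laurent_poly l K p"
  by (simp add: laurent_poly_def)

lemma laurent_poly_deriv_Nil [simp]: "laurent_poly_deriv l v [] = []"
  by (simp add: laurent_poly_deriv_def)

lemma laurent_poly_deriv_Cons [simp]:
  "laurent_poly_deriv l v ((T, m, n) # L) =
     [(T o\<^sub>L blinfun_mult_right (of_int m * l v), m - 1, n),
      (T o\<^sub>L blinfun_mult_right (of_int n * cnj (l v)), m, n - 1)] @ laurent_poly_deriv l v L"
  by (simp add: laurent_poly_deriv_def)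

lemma has_derivative_laurent_monomial:
  assumes "bounded_linear l" and "l p \<noteq> 0"
  shows "(laurent_monomial l m n has_derivative
     (\<lambda>v. of_int m * l v * laurent_monomial l (m - 1) n p
          + of_int n * cnj (l v) * laurent_monomial l m (n - 1) p)) (at p)"
proof -
  have "bounded_linear (\<lambda>q. cnj (l q))"
    using bounded_linear_compose[OF bounded_linear_cnj assms(1)] by (simp add: o_def)
  then have "((\<lambda>q. cnj (l q) powi n) has_derivative
      (\<lambda>v. cnj (l v) * (of_int n * cnj (l p) powi (n - 1)))) (at p)"
    using assms(2) by (intro has_derivative_power_int bounded_linear_imp_has_derivative) auto
  moreover have "((\<lambda>q. l q powi m) has_derivative (\<lambda>v. l v * (of_int m * l p powi (m - 1)))) (at p)"
    using assms by (intro has_derivative_power_int bounded_linear_imp_has_derivative)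
  ultimately have "((\<lambda>q. l q powi m * cnj (l q) powi n) has_derivative
      (\<lambda>v. l p powi m * (cnj (l v) * (of_int n * cnj (l p) powi (n - 1)))
           + l v * (of_int m * l p powi (m - 1)) * cnj (l p) powi n)) (at p)"
    by (rule has_derivative_mult[rotated])
  then show ?thesis
    unfolding laurent_monomial_def[abs_def]
    by (rule has_derivative_eq_rhs) (simp add: fun_eq_iff mult_ac)
qed

lemma has_derivative_laurent_poly:
  assumes "bounded_linear l" and "l p \<noteq> 0"
  shows "(laurent_poly l L has_derivative (\<lambda>v. laurent_poly l (laurent_poly_deriv l v L) p)) (at p)"
proof (induction L)
  case Nil
  show ?case by simp
next
  case (Cons a L)
  obtain T m n where a: "a = (T, m, n)" by (cases a)
  have "((\<lambda>q. T (laurent_monomial l m n q) + laurent_poly l L q) has_derivative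
     (\<lambda>v. T (of_int m * l v * laurent_monomial l (m - 1) n p
             + of_int n * cnj (l v) * laurent_monomial l m (n - 1) p)
          + laurent_poly l (laurent_poly_deriv l v L) p)) (at p)"
    by (intro has_derivative_add Cons.IH bounded_linear.has_derivative[OF blinfun.bounded_linear_right]
          has_derivative_laurent_monomial assms)
  moreover have "laurent_poly l (a # L) = (\<lambda>q. T (laurent_monomial l m n q) + laurent_poly l L q)"
    by (simp add: a fun_eq_iff)
  moreover have "laurent_poly l (laurent_poly_deriv l v (a # L)) p =
      T (of_int m * l v * laurent_monomial l (m - 1) n p
         + of_int n * cnj (l v) * laurent_monomial l m (n - 1) p)
      + laurent_poly l (laurent_poly_deriv l v L) p" for v
    by (simp add: a blinfun.add_right)
  ultimately show ?case by simp
qed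

lemma frechet_derivative_laurent_poly:
  assumes "bounded_linear l" and "open S" and "p \<in> S" and "\<And>q. q \<in> S \<Longrightarrow> l q \<noteq> 0"
    and "\<And>q. q \<in> S \<Longrightarrow> g q = laurent_poly l L q"
  shows "frechet_derivative g (at p) = (\<lambda>v. laurent_poly l (laurent_poly_deriv l v L) p)"
proof -
  have "(g has_derivative (\<lambda>v. laurent_poly l (laurent_poly_deriv l v L) p)) (at p)"
    using has_derivative_laurent_poly[OF assms(1) assms(4)[OF assms(3)]] assms(2,3)
    by (rule has_derivative_transform_within_open) (rule assms(5)[symmetric])
  from frechet_derivative_at[OF this] show ?thesis
    by (rule sym)
qed

lemma smooth_on_laurent_poly:
  assumes "bounded_linear l" and "open S" and "\<And>q. q \<in> S \<Longrightarrow> l q \<noteq> 0"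
    and "\<And>q. q \<in> S \<Longrightarrow> g q = laurent_poly l L q"
  shows "smooth_on S g"
  using assms(4)
proof (coinduction arbitrary: g L rule: smooth_on.coinduct)
  case (smooth_on g L)
  then have g_eq: "\<And>q. q \<in> S \<Longrightarrow> g q = laurent_poly l L q" by blast
  show ?case
  proof (rule exI[of _ g], intro conjI refl allI disjI1)
    have "(g has_derivative (\<lambda>v. laurent_poly l (laurent_poly_deriv l v L) p)) (at p)"
      if "p \<in> S" for p
      using has_derivative_laurent_poly[OF assms(1) assms(3)[OF that]] assms(2) that
      by (rule has_derivative_transform_within_open) (simp add: g_eq)
    then show "g differentiable_on S"
      by (meson differentiableI differentiable_at_withinI differentiable_on_def)
    fix v
    show "\<exists>g' L'. (\<lambda>q. frechet_derivative g (at q) v) = g' \<and>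
        (\<forall>q. q \<in> S \<longrightarrow> g' q = laurent_poly l L' q)"
      using frechet_derivative_laurent_poly[OF assms(1,2) _ assms(3) g_eq]
      by (intro exI[of _ "\<lambda>q. frechet_derivative g (at q) v"] exI[of _ "laurent_poly_deriv l v L"]) simp
  qed
qed

lemma frechet_derivative_const: "frechet_derivative (\<lambda>x. c) (at p) = (\<lambda>_. 0)"
  by (rule sym, rule frechet_derivative_at, rule has_derivative_const)

lemma smooth_on_const: "smooth_on S (\<lambda>x. c)"
proof (coinduction arbitrary: c rule: smooth_on.coinduct)
  case (smooth_on c)
  show ?case
  proof (intro exI[of _ "\<lambda>x. c"] conjI refl allI disjI1)
    show "(\<lambda>x. c) differentiable_on S" by simp
    fix v show "\<exists>c'. (\<lambda>p. frechet_derivative (\<lambda>x. c) (at p) v) = (\<lambda>x. c')"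
      by (intro exI[of _ 0]) (simp add: frechet_derivative_const)
  qed
qed

lemma blinfun_apply_Blinfun_linear:
  fixes f :: "'a::euclidean_space \<Rightarrow> 'b::real_normed_vector"
  assumes "linear f"
  shows "blinfun_apply (Blinfun f) = f"
  using assms by (simp add: bounded_linear_Blinfun_apply linear_conv_bounded_linear)

lemma blinfun_apply_Blinfun_bilinear:
  fixes f :: "'a::euclidean_space \<Rightarrow> 'c::euclidean_space \<Rightarrow> 'b::real_normed_vector"
  assumes "\<And>u. linear (f u)" and "\<And>v. linear (\<lambda>u. f u v)"
  shows "blinfun_apply (blinfun_apply (Blinfun (\<lambda>u. Blinfun (f u))) u) v = f u v"
proof -
  have inner: "blinfun_apply (Blinfun (f u)) = f u" for u
    by (rule blinfun_apply_Blinfun_linear[OF assms(1)])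
  have "linear (\<lambda>u. Blinfun (f u))"
  proof (rule linearI; rule blinfun_eqI)
    show "Blinfun (f (x + y)) i = (Blinfun (f x) + Blinfun (f y)) i" for x y i
      using linear_add[OF assms(2)[of i]] by (simp add: inner blinfun.add_left)
    show "Blinfun (f (r *\<^sub>R x)) i = (r *\<^sub>R Blinfun (f x)) i" for r x i
      using linear_scale[OF assms(2)[of i]] by (simp add: inner blinfun.scaleR_left)
  qed
  then show ?thesis
    by (simp add: blinfun_apply_Blinfun_linear inner)
qed

lemma cis_double_Arg_mult_cnj_div:
  fixes w :: complex
  assumes "w \<noteq> 0"
  shows "cis (2 * Arg w) * (cnj w / w) = 1"
proof -
  have "cis (Arg w) = w / of_real (cmod w)"
    using cis_Arg[OF assms] by (simp add: sgn_div_norm scaleR_conv_of_real divide_inverse mult.commute)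
  moreover have "cis (2 * Arg w) = cis (Arg w) * cis (Arg w)"
    by (simp only: cis_mult mult_2)
  ultimately have "cis (2 * Arg w) * of_real ((cmod w)\<^sup>2) = w * w"
    using assms by (simp add: field_simps power2_eq_square)
  then have "cis (2 * Arg w) * (w * cnj w) = w * w"
    by (simp only: complex_norm_square)
  then have "w * (cis (2 * Arg w) * cnj w) = w * w"
    by (simp only: ac_simps)
  then have "cis (2 * Arg w) * cnj w = w"
    using assms by simp
  then show ?thesis
    using assms by (simp add: field_simps)
qed

lemma cos_scaleR_plus_sin_scaleR_eq_cis_mult: "cos t *\<^sub>R z + sin t *\<^sub>R (\<i> * z) = cis t * z"
  by (simp add: complex_eq_iff)

section \<open>The example on C^2 x C^*\<close>

lemma bounded_linear_fib: "bounded_linear fib"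
  unfolding fib_def by (intro bounded_linear_intros)

lemma fib_apply [simp]: "fib (a, b, c) = c"
  by (simp add: fib_def)

lemma Mset_eq: "Mset = {p. fib p \<noteq> 0}"
  by (simp add: Mset_def fib_def)

lemma fib_nonzero: "p \<in> Mset \<Longrightarrow> fib p \<noteq> 0"
  by (simp add: Mset_eq)

lemma open_Mset: "open Mset"
  unfolding Mset_eq
  by (intro open_Collect_neq linear_continuous_on bounded_linear_fib continuous_on_const)

definition J_std :: "tv \<Rightarrow>\<^sub>L tv" where
  "J_std = Blinfun (\<lambda>v. (\<i> * fst v, \<i> * fst (snd v), \<i> * snd (snd v)))"

lemma J_std_apply [simp]: "J_std v = (\<i> * fst v, \<i> * fst (snd v), \<i> * snd (snd v))"
  unfolding J_std_def
  by (subst blinfun_apply_Blinfun_linear) (auto intro!: linearI simp: algebra_simps scaleR_conv_of_real)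

definition fibre_form :: "complex \<Rightarrow> tv \<Rightarrow>\<^sub>L complex" where
  "fibre_form a = Blinfun (\<lambda>v. a * fib v)"

lemma fibre_form_apply [simp]: "fibre_form a v = a * fib v"
  unfolding fibre_form_def
  by (subst blinfun_apply_Blinfun_linear) (auto intro!: linearI simp: fib_def algebra_simps scaleR_conv_of_real)

definition conn_form :: "tv \<Rightarrow> tv \<Rightarrow>\<^sub>L complex" where
  "conn_form p = fibre_form (1 / fib p)"

definition christoffel_form :: "complex \<Rightarrow> complex \<Rightarrow> tv \<Rightarrow> tv \<Rightarrow> tv" where
  "christoffel_form a b u v =
     (a * (fib u * fst v + fst u * fib v),
      a * (fib u * fst (snd v) + fst (snd u) * fib v) + b * cnj (fst u * fst v), 0)"

definition christoffel :: "complex \<Rightarrow> complex \<Rightarrow> tv \<Rightarrow>\<^sub>L tv \<Rightarrow>\<^sub>L tv" where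
  "christoffel a b = Blinfun (\<lambda>u. Blinfun (christoffel_form a b u))"

lemma christoffel_apply [simp]: "christoffel a b u v = christoffel_form a b u v"
  unfolding christoffel_def
  by (rule blinfun_apply_Blinfun_bilinear)
    (auto intro!: linearI simp: christoffel_form_def fib_def algebra_simps scaleR_conv_of_real)

definition christoffel_field :: "tv \<Rightarrow> tv \<Rightarrow>\<^sub>L tv \<Rightarrow>\<^sub>L tv" where
  "christoffel_field p = christoffel (1 / fib p) (cnj (fib p) / fib p)"

definition fibre_vector :: "complex \<Rightarrow>\<^sub>L tv" where
  "fibre_vector = Blinfun (\<lambda>z. (0, 0, z))"

lemma fibre_vector_apply [simp]: "fibre_vector z = (0, 0, z)"
  unfolding fibre_vector_def by (subst blinfun_apply_Blinfun_linear) (auto intro!: linearI)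

definition fibre_form_lin :: "complex \<Rightarrow>\<^sub>L tv \<Rightarrow>\<^sub>L complex" where
  "fibre_form_lin = Blinfun fibre_form"

lemma fibre_form_lin_apply [simp]: "fibre_form_lin a = fibre_form a"
  unfolding fibre_form_lin_def
  by (subst blinfun_apply_Blinfun_linear)
    (auto intro!: linearI blinfun_eqI simp: blinfun.add_left blinfun.scaleR_left algebra_simps scaleR_conv_of_real)

definition christoffel_lin_a :: "complex \<Rightarrow>\<^sub>L tv \<Rightarrow>\<^sub>L tv \<Rightarrow>\<^sub>L tv" where
  "christoffel_lin_a = Blinfun (\<lambda>a. christoffel a 0)"

definition christoffel_lin_b :: "complex \<Rightarrow>\<^sub>L tv \<Rightarrow>\<^sub>L tv \<Rightarrow>\<^sub>L tv" where
  "christoffel_lin_b = Blinfun (\<lambda>b. christoffel 0 b)"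

lemma christoffel_lin_apply [simp]:
  "christoffel_lin_a a = christoffel a 0"
  "christoffel_lin_b b = christoffel 0 b"
  unfolding christoffel_lin_a_def christoffel_lin_b_def
  by (subst blinfun_apply_Blinfun_linear,
      auto intro!: linearI blinfun_eqI
        simp: blinfun.add_left blinfun.scaleR_left christoffel_form_def algebra_simps scaleR_conv_of_real)+

lemma xi_laurent: "xi p = laurent_poly fib [(fibre_vector, 1, 0)] p"
  by (simp add: xi_def laurent_monomial_simps)

lemma conn_form_laurent: "conn_form p = laurent_poly fib [(fibre_form_lin, -1, 0)] p"
  by (simp add: conn_form_def laurent_monomial_simps)

lemma christoffel_field_laurent:
  "christoffel_field p = laurent_poly fib [(christoffel_lin_a, -1, 0), (christoffel_lin_b, -1, 1)] p"
  by (auto intro!: blinfun_eqI simp: christoffel_field_def laurent_monomial_simps blinfun.add_left christoffel_form_def)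

lemma smooth_on_Mset_laurent_poly:
  assumes "\<And>q. q \<in> Mset \<Longrightarrow> g q = laurent_poly fib L q"
  shows "smooth_on Mset g"
  using bounded_linear_fib open_Mset fib_nonzero assms by (rule smooth_on_laurent_poly)

lemma frechet_derivative_Mset_laurent_poly:
  assumes "p \<in> Mset" and "\<And>q. q \<in> Mset \<Longrightarrow> g q = laurent_poly fib L q"
  shows "frechet_derivative g (at p) = (\<lambda>v. laurent_poly fib (laurent_poly_deriv fib v L) p)"
  using bounded_linear_fib open_Mset assms(1) fib_nonzero assms(2) by (rule frechet_derivative_laurent_poly)

lemma smooth_on_xi: "smooth_on Mset xi"
  and smooth_on_conn_form: "smooth_on Mset conn_form"
  and smooth_on_christoffel_field: "smooth_on Mset christoffel_field"
  by (rule smooth_on_Mset_laurent_poly, rule xi_laurent conn_form_laurent christoffel_field_laurent)+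

lemma frechet_derivative_xi:
  assumes "p \<in> Mset"
  shows "frechet_derivative xi (at p) u = (0, 0, fib u)"
  by (simp add: frechet_derivative_Mset_laurent_poly[OF assms xi_laurent] laurent_monomial_simps)

lemma frechet_derivative_conn_form:
  assumes "p \<in> Mset"
  shows "frechet_derivative conn_form (at p) u = fibre_form (- fib u / (fib p)\<^sup>2)"
  by (auto intro!: blinfun_eqI
      simp: frechet_derivative_Mset_laurent_poly[OF assms conn_form_laurent] laurent_monomial_simps)

lemma frechet_derivative_christoffel_field:
  assumes "p \<in> Mset"
  shows "frechet_derivative christoffel_field (at p) u =
    christoffel (- fib u / (fib p)\<^sup>2) (cnj (fib u) / fib p - cnj (fib p) * fib u / (fib p)\<^sup>2)"
  by (auto intro!: blinfun_eqI
      simp: frechet_derivative_Mset_laurent_poly[OF assms christoffel_field_laurent] laurent_monomial_simps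
        blinfun.add_left christoffel_form_def field_simps)

lemma nablaJ_eq:
  "nablaJ christoffel_field (\<lambda>_. J_std) p u v = (0, - 2 * \<i> * (cnj (fib p) / fib p) * cnj (fst u * fst v), 0)"
  by (simp add: nablaJ_def frechet_derivative_const christoffel_field_def christoffel_form_def fib_def algebra_simps)

lemma curv_christoffel_field_eq_0:
  assumes "p \<in> Mset"
  shows "curv christoffel_field p u v w = 0"
  using fib_nonzero[OF assms]
  by (simp add: curv_def frechet_derivative_christoffel_field[OF assms] christoffel_field_def christoffel_form_def
      prod_eq_iff field_simps power2_eq_square)

lemma conical_special_complex_J_std: "conical_special_complex (\<lambda>_. J_std) christoffel_field xi"
  unfolding conical_special_complex_def
proof (intro conjI ballI allI)
  fix p assume p: "p \<in> Mset"
  fix u v w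
  show "J_std (J_std v) = - v"
    by (simp add: prod_eq_iff)
  show "nijenhuis (\<lambda>_. J_std) p u v = 0"
    by (simp add: nijenhuis_def frechet_derivative_const)
  show "christoffel_field p u v = christoffel_field p v u"
    by (simp add: christoffel_field_def christoffel_form_def algebra_simps)
  show "curv christoffel_field p u v w = 0"
    by (rule curv_christoffel_field_eq_0[OF p])
  show "nablaJ christoffel_field (\<lambda>_. J_std) p u v = nablaJ christoffel_field (\<lambda>_. J_std) p v u"
    by (simp add: nablaJ_eq mult.commute)
  show "xi p \<noteq> 0"
    using fib_nonzero[OF p] by (simp add: xi_def zero_prod_def)
  show "nablaV christoffel_field xi p u = u"
    using fib_nonzero[OF p]
    by (simp add: nablaV_def frechet_derivative_xi[OF p] christoffel_field_def christoffel_form_def xi_def fib_def)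
  show "lieJ (\<lambda>_. J_std) xi p v = 0"
    by (simp add: lieJ_def frechet_derivative_const frechet_derivative_xi[OF p] fib_def zero_prod_def)
qed (simp_all add: smooth_on_const smooth_on_christoffel_field smooth_on_xi)

lemma bundle_compatible_J_std: "bundle_compatible (\<lambda>_. J_std)"
  by (simp add: bundle_compatible_def xi_def pr_def Jbar_def)

lemma principal_conn_10_conn_form: "principal_conn_10 (\<lambda>_. J_std) conn_form"
  unfolding principal_conn_10_def
  by (auto simp: smooth_on_conn_form conn_form_def xi_def Rmult_def fib_nonzero)

lemma eta_flat_conn_form: "eta_flat conn_form"
  by (simp add: eta_flat_def frechet_derivative_conn_form)

lemma hl_conn_form:
  assumes "p \<in> Mset"
  shows "hl conn_form p X = (fst X, snd X, 0)"
  unfolding hl_def using fib_nonzero[OF assms]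
  by (rule_tac the_equality) (auto simp: conn_form_def pr_def prod_eq_iff)

lemma Bt_eq:
  assumes "p \<in> Mset"
  shows "Bt (\<lambda>_. J_std) christoffel_field p u v = (0, - 2 * \<i> * cnj (fst u * fst v), 0)"
proof -
  define t where "t = 2 * Arg (fib p)"
  define z where "z = - 2 * \<i> * (cnj (fib p) / fib p) * cnj (fst u * fst v)"
  have "Bt (\<lambda>_. J_std) christoffel_field p u v = (0, cos t *\<^sub>R z + sin t *\<^sub>R (\<i> * z), 0)"
    by (simp add: Bt_def nablaJ_eq t_def z_def)
  moreover have "cos t *\<^sub>R z + sin t *\<^sub>R (\<i> * z) = - 2 * \<i> * cnj (fst u * fst v) * (cis t * (cnj (fib p) / fib p))"
    unfolding cos_scaleR_plus_sin_scaleR_eq_cis_mult by (simp add: z_def)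
  moreover have "cis t * (cnj (fib p) / fib p) = 1"
    unfolding t_def by (rule cis_double_Arg_mult_cnj_div[OF fib_nonzero[OF assms]])
  ultimately show ?thesis by simp
qed

lemma barB_eq:
  assumes "p \<in> Mset"
  shows "barB (\<lambda>_. J_std) christoffel_field conn_form p X Y = (0, - 2 * \<i> * cnj (fst X * fst Y))"
  by (simp add: barB_def Bt_eq[OF assms] hl_conn_form[OF assms] pr_def)

lemma tr_barB_comp_eq_0:
  assumes "p \<in> Mset"
  shows "tr (\<lambda>Z. barB (\<lambda>_. J_std) christoffel_field conn_form p X (barB (\<lambda>_. J_std) christoffel_field conn_form p Y Z)) = 0"
  by (simp add: barB_eq[OF assms] tr_def flip: zero_prod_def)

lemma barc_eq_0:
  assumes "p \<in> Mset"
  shows "barc (\<lambda>_. J_std) christoffel_field conn_form p X Y = 0"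
  unfolding barc_def
proof (rule the_equality)
  have Bt_hl: "Bt (\<lambda>_. J_std) christoffel_field p (hl conn_form p X) (hl conn_form p Y)
      = hl conn_form p (barB (\<lambda>_. J_std) christoffel_field conn_form p X Y)"
    by (simp add: Bt_eq[OF assms] hl_conn_form[OF assms] barB_eq[OF assms])
  then show "\<exists>c'. Bt (\<lambda>_. J_std) christoffel_field p (hl conn_form p X) (hl conn_form p Y)
      = hl conn_form p (barB (\<lambda>_. J_std) christoffel_field conn_form p X Y) + 0 *\<^sub>R xi p + c' *\<^sub>R J_std (xi p)"
    by (intro exI[of _ 0]) (simp add: zero_prod_def)
  fix c
  assume "\<exists>c'. Bt (\<lambda>_. J_std) christoffel_field p (hl conn_form p X) (hl conn_form p Y)
      = hl conn_form p (barB (\<lambda>_. J_std) christoffel_field conn_form p X Y) + c *\<^sub>R xi p + c' *\<^sub>R J_std (xi p)"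
  then obtain c' where "c *\<^sub>R xi p + c' *\<^sub>R J_std (xi p) = 0"
    using Bt_hl by auto
  then have "(complex_of_real c + \<i> * complex_of_real c') * fib p = 0"
    by (simp add: xi_def prod_eq_iff scaleR_conv_of_real algebra_simps)
  then have "complex_of_real c + \<i> * complex_of_real c' = 0"
    using fib_nonzero[OF assms] by simp
  then show "c = 0"
    by (simp add: complex_eq_iff)
qed

lemma conn_form_nablaJ_eq_0: "conn_form p (nablaJ christoffel_field (\<lambda>_. J_std) p u v) = 0"
  by (simp add: conn_form_def nablaJ_eq)

lemma frechet_derivative_horizontal_lift:
  assumes "p \<in> Mset" and "Y differentiable_on UNIV"
  shows "frechet_derivative (\<lambda>q. hl conn_form q (Y (pr q))) (at p) =
    (\<lambda>u. (fst (frechet_derivative Y (at (pr p)) (pr u)), snd (frechet_derivative Y (at (pr p)) (pr u)), 0))"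
proof -
  define lift :: "bv \<Rightarrow> tv" where "lift y = (fst y, snd y, 0)" for y
  have bounded_linear_lift: "bounded_linear lift" and bounded_linear_pr: "bounded_linear pr"
    unfolding lift_def[abs_def] pr_def[abs_def] by (intro bounded_linear_intros)+
  have "(Y has_derivative frechet_derivative Y (at (pr p))) (at (pr p))"
    using assms(2) unfolding differentiable_on_def frechet_derivative_works[symmetric] by blast
  then have "((\<lambda>q. Y (pr q)) has_derivative (\<lambda>u. frechet_derivative Y (at (pr p)) (pr u))) (at p)"
    using diff_chain_at[OF bounded_linear_imp_has_derivative[OF bounded_linear_pr]] by (simp add: o_def)
  then have "((\<lambda>q. lift (Y (pr q))) has_derivative (\<lambda>u. lift (frechet_derivative Y (at (pr p)) (pr u)))) (at p)"
    by (rule bounded_linear.has_derivative[OF bounded_linear_lift])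
  then have "((\<lambda>q. hl conn_form q (Y (pr q))) has_derivative
      (\<lambda>u. lift (frechet_derivative Y (at (pr p)) (pr u)))) (at p)"
    using open_Mset assms(1) by (rule has_derivative_transform_within_open) (simp add: hl_conn_form lift_def)
  from frechet_derivative_at[OF this] show ?thesis
    unfolding lift_def by (rule sym)
qed

lemma canonical_cproj_is_std_conn_form:
  "canonical_cproj_is_std (\<lambda>_. J_std) christoffel_field conn_form"
  unfolding canonical_cproj_is_std_def
proof (intro exI[of _ "\<lambda>x. 0"] conjI allI impI ballI)
  show "smooth_on UNIV (\<lambda>x::bv. 0::bv \<Rightarrow>\<^sub>L real)"
    by (rule smooth_on_const)
  fix X Y :: "bv \<Rightarrow> bv" and p
  assume "smooth_on UNIV X \<and> smooth_on UNIV Y" and p: "p \<in> Mset"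
  then have "Y differentiable_on UNIV"
    using smooth_on.cases by blast
  note dY = frechet_derivative_horizontal_lift[OF p this]
  show "let Xt = (\<lambda>q. hl conn_form q (X (pr q))); Yt = (\<lambda>q. hl conn_form q (Y (pr q))); x = pr p
        in pr (nablaV christoffel_field Yt p (Xt p)
               - (1/2) *\<^sub>R J_std (nablaJ christoffel_field (\<lambda>_. J_std) p (Xt p) (Yt p)))
           = frechet_derivative Y (at x) (X x) + cproj_term (\<lambda>x. 0) x (X x) (Y x)"
    unfolding Let_def nablaV_def dY
    by (simp add: hl_conn_form[OF p] nablaJ_eq pr_def cproj_term_def christoffel_field_def
        christoffel_form_def scaleR_conv_of_real algebra_simps)
qed

theorem proposition4p21:
  shows "\<exists>(J :: tv \<Rightarrow> tv \<Rightarrow>\<^sub>L tv) (G :: tv \<Rightarrow> tv \<Rightarrow>\<^sub>L tv \<Rightarrow>\<^sub>L tv) (\<omega> :: tv \<Rightarrow> tv \<Rightarrow>\<^sub>L complex).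
           conical_special_complex J G xi \<and>
           bundle_compatible J \<and>
           principal_conn_10 J \<omega> \<and>
           eta_flat \<omega> \<and>
           canonical_cproj_is_std J G \<omega> \<and>
           (\<exists>p\<in>Mset. \<exists>X Y. barB J G \<omega> p X Y \<noteq> 0) \<and>
           (\<forall>p\<in>Mset. \<forall>X Y. tr (\<lambda>Z. barB J G \<omega> p X (barB J G \<omega> p Y Z)) = 0) \<and>
           (\<forall>p\<in>Mset. \<forall>X Y. barc J G \<omega> p X Y = 0) \<and>
           \<not> trivial_csc J G \<and>
           (\<forall>p\<in>Mset. \<forall>u v. blinfun_apply (\<omega> p) (nablaJ G J p u v) = 0)"
proof (intro exI conjI)
  have p1: "(0, 0, 1) \<in> Mset"
    by (simp add: Mset_def)
  show "\<exists>p\<in>Mset. \<exists>X Y. barB (\<lambda>_. J_std) christoffel_field conn_form p X Y \<noteq> 0"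
    using p1 by (intro bexI[of _ "(0, 0, 1)"] exI[of _ "(1, 0)"]) (simp add: barB_eq zero_prod_def)
  show "\<not> trivial_csc (\<lambda>_. J_std) christoffel_field"
    using p1 unfolding trivial_csc_def
    by (intro bexI[of _ "(0, 0, 1)"] notI) (auto dest: spec[of _ "(1, 0, 0)"] simp: nablaJ_eq zero_prod_def)
qed (simp_all add: conical_special_complex_J_std bundle_compatible_J_std principal_conn_10_conn_form
    eta_flat_conn_form canonical_cproj_is_std_conn_form tr_barB_comp_eq_0 barc_eq_0 conn_form_nablaJ_eq_0)

end
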